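(* For every real $c<1$ there exist an infinite binary sequence $\omega=\omega_1\omega_2\omega_3\dots$ and a constant $d$ such that every finite substring $x=\omega_i\omega_{i+1}\dots\omega_j$ of $\omega$ satisfies $K(x)\ge c\,\|x\|-d$. *)

theory Defs
  imports Complex_Main "HOL-Library.Extended_Real" "HOL-Library.Sublist"
begin

datatype recf = Z | S | Id nat | Cn recf "recf list" | Pr recf recf | Mn recf

inductive eval :: "recf \<Rightarrow> nat list \<Rightarrow> nat \<Rightarrow> bool" where
  evZ: "eval Z xs 0"
| evS: "eval S (x # xs) (Suc x)"
| evId: "i < length xs \<Longrightarrow> eval (Id i) xs (xs ! i)"
| evCn: "length ys = length gs \<Longrightarrow> (\<forall>k < length gs. eval (gs ! k) xs (ys ! k))
          \<Longrightarrow> eval f ys z \<Longrightarrow> eval (Cn f gs) xs z"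
| evPr0: "eval g xs z \<Longrightarrow> eval (Pr g h) (0 # xs) z"
| evPrS: "eval (Pr g h) (n # xs) y \<Longrightarrow> eval h (n # y # xs) z
          \<Longrightarrow> eval (Pr g h) (Suc n # xs) z"
| evMn: "eval f (n # xs) 0 \<Longrightarrow> (\<forall>m < n. \<exists>y. 0 < y \<and> eval f (m # xs) y)
          \<Longrightarrow> eval (Mn f) xs n"

text \<open>Bijective coding of binary strings by natural numbers.\<close>
fun code :: "bool list \<Rightarrow> nat" where
  "code [] = 0"
| "code (b # bs) = (if b then 2 else 1) + 2 * code bs"

definition runs :: "recf \<Rightarrow> bool list \<Rightarrow> bool list \<Rightarrow> bool" where
  "runs M p x \<longleftrightarrow> eval M [code p] (code x)"

definition prefix_free_machine :: "recf \<Rightarrow> bool" where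
  "prefix_free_machine M \<longleftrightarrow>
     (\<forall>p q x y. runs M p x \<and> runs M q y \<and> prefix p q \<longrightarrow> p = q)"

text \<open>Prefix complexity relative to a machine (infinite if x is never output).\<close>
definition KM :: "recf \<Rightarrow> bool list \<Rightarrow> enat" where
  "KM M x = (INF p \<in> {p. runs M p x}. enat (length p))"

definition optimal_machine :: "recf \<Rightarrow> bool" where
  "optimal_machine U \<longleftrightarrow> prefix_free_machine U \<and>
     (\<forall>M. prefix_free_machine M \<longrightarrow> (\<exists>e::nat. \<forall>x. KM U x \<le> KM M x + enat e))"

end

theory Submission
  imports Defs
begin

(* Put c' = max c 0 < 1 and t = 2 powr c' < 2. A machine has at most one output per program, so
   fewer than 2 powr (R + 1) words have complexity below R; hence the forbidden words, those x with
   K(x) < c' |x| - d, number at most C t^k in each length k, where C = 2 powr (1 - d) can be made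
   as small as we like. If a_n counts the words of length n without forbidden factors, appending a
   letter to such a word yields either another one or a word ending in a forbidden word after an
   avoiding prefix, so 2 a_n <= a_(n+1) + sum_(k<=n) a_(n-k) f_(k+1), with f_j the number of
   forbidden words of length j. For small C this forces a_(n+1) >= beta a_n with
   beta = (t + 2) / 2 >= 1, so avoiding words exist in every length, and Koenig's lemma gives an
   infinite sequence without forbidden factors. *)

lemma code_Cons_mod_2: "code (b # x) mod 2 = (if b then 0 else 1)"
  by simp

lemma code_eq_iff: "code x = code y \<longleftrightarrow> x = y"
proof (induction x arbitrary: y)
  case Nil
  show ?case by (cases y) auto
next
  case (Cons b x)
  show ?case
  proof
    assume eq: "code (b # x) = code y"
    then obtain c y' where y: "y = c # y'" by (cases y) (auto split: if_splits)
    with eq have "b = c" by (metis code_Cons_mod_2 zero_neq_one)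
    with eq y have "code x = code y'" by simp
    then have "x = y'" using Cons.IH by blast
    with y \<open>b = c\<close> show "b # x = y" by simp
  qed simp
qed

lemma eval_deterministic: "eval f xs y \<Longrightarrow> eval f xs z \<Longrightarrow> y = z"
proof (induction arbitrary: z rule: eval.induct)
  case (evCn ys gs xs f z)
  from evCn.prems obtain ys' where len: "length ys' = length gs"
    and args: "\<forall>k<length gs. eval (gs ! k) xs (ys' ! k)" and "eval f ys' z"
    by (cases rule: eval.cases) simp_all
  have "ys = ys'"
    by (rule nth_equalityI) (use evCn.hyps(1) evCn.IH(1) len args in auto)
  with \<open>eval f ys' z\<close> show ?case using evCn.IH(2) by simp
next
  case (evPrS g h n xs y z)
  from evPrS.prems show ?case
  proof (cases rule: eval.cases)
    case (evPrS y')
    with evPrS.IH show ?thesis by simp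
  qed
next
  case (evMn f n xs z)
  from evMn.prems show ?case
  proof (cases rule: eval.cases)
    case evMn
    show ?thesis
    proof (rule linorder_cases[of n z])
      assume "n < z"
      then obtain y where "0 < y" "eval f (n # xs) y" using evMn by blast
      then show ?thesis using evMn.IH(1) by fastforce
    next
      assume "z < n"
      then obtain y where "0 < y" "\<forall>y'. eval f (z # xs) y' \<longrightarrow> y = y'" using evMn.IH(2) by blast
      then show ?thesis using evMn by fastforce
    qed
  qed
qed (erule eval.cases; simp_all)+

lemma runs_functional: "runs M p x \<Longrightarrow> runs M p y \<Longrightarrow> x = y"
  unfolding runs_def using eval_deterministic code_eq_iff by blast

lemma KM_le_enat_iff: "KM M x \<le> enat n \<longleftrightarrow> (\<exists>p. runs M p x \<and> length p \<le> n)"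
proof -
  have "KM M x \<le> enat n \<longleftrightarrow> KM M x < enat (Suc n)"
    by (cases "KM M x") auto
  also have "\<dots> \<longleftrightarrow> (\<exists>p. runs M p x \<and> length p \<le> n)"
    unfolding KM_def by (auto simp: INF_less_iff)
  finally show ?thesis .
qed

lemma
  shows finite_KM_le: "finite {x. KM M x \<le> enat n}"
    and card_KM_le: "card {x. KM M x \<le> enat n} < 2 ^ Suc n"
proof -
  let ?S = "{x. KM M x \<le> enat n}" and ?P = "{p :: bool list. length p \<le> n}"
  obtain prog where prog: "\<forall>x \<in> ?S. runs M (prog x) x \<and> length (prog x) \<le> n"
    using bchoice[of ?S "\<lambda>x p. runs M p x \<and> length p \<le> n"] KM_le_enat_iff by auto
  have inj: "inj_on prog ?S"
    by (rule inj_onI) (use prog runs_functional in metis)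
  have image: "prog ` ?S \<subseteq> ?P" using prog by auto
  have "finite ?P" using finite_lists_length_le[of "UNIV :: bool set" n] by simp
  then show "finite ?S" using finite_imageD[OF finite_subset[OF image] inj] by blast
  have "card ?S = card (prog ` ?S)" using card_image[OF inj] by simp
  also have "\<dots> \<le> card ?P" using \<open>finite ?P\<close> image by (rule card_mono)
  also have "\<dots> = (\<Sum>i\<le>n. 2 ^ i)" using card_lists_length_le[of "UNIV :: bool set" n] by simp
  also have "\<dots> < 2 ^ Suc n"
    using sum_power2[of "Suc n"] by (simp add: atLeast0LessThan lessThan_Suc_atMost)
  finally show "card ?S < 2 ^ Suc n" .
qed

lemma
  fixes R :: real
  shows finite_KM_less_ereal: "finite {x. ereal_of_enat (KM M x) < ereal R}"
    and card_KM_less_ereal: "card {x. ereal_of_enat (KM M x) < ereal R} \<le> 2 powr (R + 1)"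
proof -
  let ?S = "{x. ereal_of_enat (KM M x) < ereal R}"
  define N where "N = nat \<lfloor>R\<rfloor>"
  have sub: "?S \<subseteq> {x. KM M x \<le> enat N}"
  proof
    fix x assume "x \<in> ?S"
    then show "x \<in> {x. KM M x \<le> enat N}"
      by (cases "KM M x") (auto simp: N_def le_nat_floor)
  qed
  then show "finite ?S" by (rule finite_subset[OF _ finite_KM_le])
  show "card ?S \<le> 2 powr (R + 1)"
  proof (cases "R < 0")
    case True
    then have "ereal R \<le> 0" by simp
    then have "ereal R \<le> ereal_of_enat K" for K using ereal_of_enat_nonneg by (rule order.trans)
    then have "?S = {}" by (simp add: not_less)
    then show ?thesis by simp
  next
    case False
    have "card ?S \<le> card {x. KM M x \<le> enat N}" using sub finite_KM_le by (rule card_mono[rotated])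
    also have "\<dots> \<le> 2 ^ Suc N" by (rule less_imp_le[OF card_KM_le])
    finally have "real (card ?S) \<le> real (2 ^ Suc N)" by (rule of_nat_mono)
    also have "\<dots> = 2 powr (real N + 1)" by (simp add: powr_add powr_realpow)
    also have "\<dots> \<le> 2 powr (R + 1)" using False by (simp add: N_def)
    finally show ?thesis .
  qed
qed

lemma card_KM_below_linear:
  fixes a b :: real
  shows "card {x. length x = k \<and> ereal_of_enat (KM M x) < ereal (a * real k - b)}
           \<le> 2 powr (1 - b) * (2 powr a) ^ k"
proof -
  have "card {x. length x = k \<and> ereal_of_enat (KM M x) < ereal (a * real k - b)}
      \<le> card {x. ereal_of_enat (KM M x) < ereal (a * real k - b)}"
    by (rule card_mono[OF finite_KM_less_ereal]) auto
  then have "real (card {x. length x = k \<and> ereal_of_enat (KM M x) < ereal (a * real k - b)})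
      \<le> card {x. ereal_of_enat (KM M x) < ereal (a * real k - b)}"
    by (rule of_nat_mono)
  also have "\<dots> \<le> 2 powr (a * real k - b + 1)" by (rule card_KM_less_ereal)
  also have "\<dots> = 2 powr (1 - b) * (2 powr a) ^ k"
    by (simp add: powr_powr powr_realpow[symmetric] powr_add[symmetric] algebra_simps)
  finally show ?thesis .
qed

definition avoids :: "'a list set \<Rightarrow> 'a list \<Rightarrow> bool" where
  "avoids F w \<longleftrightarrow> (\<forall>x. sublist x w \<longrightarrow> x \<notin> F)"

definition avoiding_words :: "bool list set \<Rightarrow> nat \<Rightarrow> bool list set" where
  "avoiding_words F n = {w. length w = n \<and> avoids F w}"

lemma avoids_sublist: "avoids F w \<Longrightarrow> sublist v w \<Longrightarrow> avoids F v"
  unfolding avoids_def using sublist_order.order.trans by blast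

lemma finite_words_of_length: "finite {x :: bool list \<in> F. length x = n}"
  by (rule finite_subset[OF _ finite_lists_length_eq[OF finite_UNIV, of n]]) auto

lemma finite_avoiding_words: "finite (avoiding_words F n)"
  by (rule finite_subset[OF _ finite_lists_length_eq[OF finite_UNIV, of n]])
    (auto simp: avoiding_words_def)

lemma not_avoids_snoc:
  assumes "[] \<notin> F" and "avoids F w" and "\<not> avoids F (w @ [b])"
  obtains y z where "w @ [b] = y @ z" and "avoids F y" and "z \<in> F"
proof -
  obtain z where z: "sublist z (w @ [b])" "z \<in> F" using assms(3) by (auto simp: avoids_def)
  have "\<not> sublist z w" using assms(2) z(2) by (auto simp: avoids_def)
  then have "suffix z (w @ [b])" using z(1) by (simp add: sublist_snoc)
  then obtain y where y: "w @ [b] = y @ z" by (auto simp: suffix_def)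
  obtain z' c where "z = z' @ [c]" using assms(1) z(2) by (cases z rule: rev_cases) auto
  then have "w = y @ z'" using y by simp
  then have "avoids F y" using assms(2) by (simp add: avoids_sublist[of F "y @ z'" y])
  from y this z(2) show thesis by (rule that)
qed

lemma card_avoiding_words_Suc:
  fixes F :: "bool list set"
  assumes "[] \<notin> F"
  shows "2 * card (avoiding_words F n) \<le> card (avoiding_words F (Suc n)) +
           (\<Sum>k\<le>n. card (avoiding_words F (n - k)) * card {x \<in> F. length x = Suc k})"
proof -
  let ?A = "avoiding_words F" and ?F = "\<lambda>k. {x \<in> F. length x = Suc k}"
  let ?S = "(\<lambda>(w, b). w @ [b]) ` (?A n \<times> UNIV)"
  let ?T = "\<lambda>k. (\<lambda>(y, z). y @ z) ` (?A (n - k) \<times> ?F k)"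
  have "inj_on (\<lambda>(w, b). w @ [b]) (?A n \<times> UNIV)" by (auto simp: inj_on_def)
  then have card_S: "card ?S = 2 * card (?A n)"
    by (simp add: card_image card_cartesian_product)
  have "?S \<subseteq> ?A (Suc n) \<union> (\<Union>k\<le>n. ?T k)"
  proof
    fix u assume "u \<in> ?S"
    then obtain w b where u: "u = w @ [b]" and w: "w \<in> ?A n" by auto
    show "u \<in> ?A (Suc n) \<union> (\<Union>k\<le>n. ?T k)"
    proof (cases "avoids F u")
      case True
      with u w show ?thesis by (simp add: avoiding_words_def)
    next
      case False
      with u w have "avoids F w" "\<not> avoids F (w @ [b])" by (auto simp: avoiding_words_def)
      then obtain y z where yz: "w @ [b] = y @ z" "avoids F y" "z \<in> F"
        using assms not_avoids_snoc by metis
      define k where "k = length z - 1"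
      have "length z = Suc k" using assms yz(3) by (cases z) (auto simp: k_def)
      moreover have "length y + length z = Suc n"
        using w arg_cong[OF yz(1), of length] by (simp add: avoiding_words_def)
      ultimately have "k \<le> n" and "u \<in> ?T k"
        using u yz by (auto simp: avoiding_words_def)
      then show ?thesis by blast
    qed
  qed
  then have "card ?S \<le> card (?A (Suc n) \<union> (\<Union>k\<le>n. ?T k))"
    by (rule card_mono[rotated])
      (auto intro!: finite_cartesian_product simp: finite_avoiding_words finite_words_of_length)
  also have "\<dots> \<le> card (?A (Suc n)) + card (\<Union>k\<le>n. ?T k)" by (rule card_Un_le)
  also have "card (\<Union>k\<le>n. ?T k) \<le> (\<Sum>k\<le>n. card (?T k))" by (rule card_UN_le) simp
  also have "\<dots> \<le> (\<Sum>k\<le>n. card (?A (n - k)) * card (?F k))"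
    by (rule sum_mono, rule order.trans[OF card_image_le])
      (simp_all add: card_cartesian_product finite_avoiding_words finite_words_of_length)
  finally show ?thesis using card_S by linarith
qed

lemma convolution_recurrence_growth:
  fixes a g :: "nat \<Rightarrow> real" and \<beta> :: real
  assumes a_nonneg: "\<And>n. 0 \<le> a n" and g_nonneg: "\<And>k. 0 \<le> g k" and "1 \<le> \<beta>"
    and recurrence: "\<And>n. 2 * a n \<le> a (Suc n) + (\<Sum>k\<le>n. a (n - k) * g k)"
    and weights: "\<And>n. (\<Sum>k\<le>n. g k / \<beta> ^ k) \<le> 2 - \<beta>"
  shows "\<beta> * a n \<le> a (Suc n)"
proof (induction n rule: less_induct)
  case (less n)
  have earlier: "a (n - k) * \<beta> ^ k \<le> a n" if "k \<le> n" for k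
    using that
  proof (induction k)
    case (Suc k)
    have "a (n - Suc k) * \<beta> ^ Suc k = (\<beta> * a (n - Suc k)) * \<beta> ^ k" by simp
    also have "\<dots> \<le> a (n - k) * \<beta> ^ k"
      using less.IH[of "n - Suc k"] Suc.prems \<open>1 \<le> \<beta>\<close> by (intro mult_right_mono) (auto simp: Suc_diff_Suc)
    also have "\<dots> \<le> a n" using Suc by simp
    finally show ?case .
  qed simp
  have "(\<Sum>k\<le>n. a (n - k) * g k) \<le> (\<Sum>k\<le>n. a n * (g k / \<beta> ^ k))"
  proof (rule sum_mono)
    fix k assume "k \<in> {..n}"
    then have "a (n - k) \<le> a n / \<beta> ^ k" using earlier \<open>1 \<le> \<beta>\<close> by (simp add: field_simps)
    then show "a (n - k) * g k \<le> a n * (g k / \<beta> ^ k)"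
      using g_nonneg[of k] mult_right_mono by fastforce
  qed
  also have "\<dots> \<le> a n * (2 - \<beta>)"
    unfolding sum_distrib_left[symmetric] using weights a_nonneg by (rule mult_left_mono)
  finally show ?case using recurrence[of n] by (simp add: algebra_simps)
qed

lemma avoiding_words_nonempty:
  fixes F :: "bool list set" and \<beta> :: real
  assumes "[] \<notin> F" and "1 \<le> \<beta>"
    and weights: "\<And>n. (\<Sum>k\<le>n. card {x \<in> F. length x = Suc k} / \<beta> ^ k) \<le> 2 - \<beta>"
  shows "avoiding_words F n \<noteq> {}"
proof -
  define a where "a n = real (card (avoiding_words F n))" for n
  have recurrence: "2 * a n \<le> a (Suc n) + (\<Sum>k\<le>n. a (n - k) * card {x \<in> F. length x = Suc k})" for n
    using of_nat_mono[OF card_avoiding_words_Suc[OF \<open>[] \<notin> F\<close>, of n], where 'a=real]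
    by (simp add: a_def)
  have growth: "\<beta> * a n \<le> a (Suc n)" for n
    by (rule convolution_recurrence_growth[OF _ _ \<open>1 \<le> \<beta>\<close> recurrence weights])
      (simp_all add: a_def)
  have "avoiding_words F 0 = {[]}" using \<open>[] \<notin> F\<close> by (auto simp: avoiding_words_def avoids_def)
  then have "1 \<le> a n" for n
  proof (induction n)
    case (Suc n)
    then have "1 \<le> \<beta> * a n" using \<open>1 \<le> \<beta>\<close> by (metis mult_mono' mult_1 zero_le_one)
    then show ?case using growth[of n] by linarith
  qed (simp add: a_def)
  from this[of n] show ?thesis by (auto simp: a_def)
qed

lemma prefix_closed_infinite_path:
  fixes P :: "'a :: finite list \<Rightarrow> bool"
  assumes long: "\<And>n. \<exists>w. length w = n \<and> P w"
    and prefix_closed: "\<And>v w. P (v @ w) \<Longrightarrow> P v"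
  shows "\<exists>\<omega>. \<forall>n. P (map \<omega> [0..<n])"
proof -
  define extensible where "extensible w \<longleftrightarrow> (\<forall>m. \<exists>v. length v = m \<and> P (w @ v))" for w
  have "\<exists>b. extensible (w @ [b])" if "extensible w" for w
  proof (rule ccontr)
    assume "\<nexists>b. extensible (w @ [b])"
    then obtain m where m: "\<And>b v. length v = m b \<Longrightarrow> \<not> P (w @ b # v)"
      unfolding extensible_def by (metis append_Cons append_Nil append_assoc)
    obtain v where v: "length v = Suc (Max (range m))" "P (w @ v)"
      using \<open>extensible w\<close> unfolding extensible_def by blast
    then obtain b v' where "v = b # v'" by (cases v) auto
    have "w @ v = (w @ b # take (m b) v') @ drop (m b) v'" using \<open>v = b # v'\<close> by simp
    then have "P (w @ b # take (m b) v')" using v(2) prefix_closed by metis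
    moreover have "m b \<le> length v'" using v(1) \<open>v = b # v'\<close> by simp
    ultimately show False using m by simp
  qed
  then obtain extend where extend: "\<And>w. extensible w \<Longrightarrow> extensible (w @ [extend w])"
    by metis
  define pre where "pre n = ((\<lambda>w. w @ [extend w]) ^^ n) []" for n
  define \<omega> where "\<omega> n = extend (pre n)" for n
  have "extensible (pre n)" for n
    by (induction n) (use long extend in \<open>auto simp: pre_def extensible_def\<close>)
  moreover have "map \<omega> [0..<n] = pre n" for n
    by (induction n) (simp_all add: pre_def \<omega>_def)
  ultimately have "P (map \<omega> [0..<n])" for n
    unfolding extensible_def by (metis append_Nil2 length_0_conv)
  then show ?thesis by blast
qed

(* With beta = (t + 2) / 2 between t and 2 the weighted sum is geometric with ratio t / beta < 1,
   and the bound on C is what makes its value C t / (1 - t / beta) at most 2 - beta. *)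
lemma geometric_weights_bound:
  fixes f :: "nat \<Rightarrow> real" and t C :: real
  assumes "1 \<le> t" and "t < 2" and "0 \<le> C"
    and f_le: "\<And>k. f k \<le> C * t ^ Suc k"
    and C_small: "C \<le> (2 - t)\<^sup>2 / (2 * t * (t + 2))"
  shows "(\<Sum>k\<le>n. f k / ((t + 2) / 2) ^ k) \<le> 2 - (t + 2) / 2"
proof -
  define \<beta> where "\<beta> = (t + 2) / 2"
  define r where "r = t / \<beta>"
  have "1 \<le> \<beta>" "0 \<le> r" "r < 1" using assms(1,2) by (auto simp: \<beta>_def r_def field_simps)
  have "(\<Sum>k\<le>n. f k / \<beta> ^ k) \<le> (\<Sum>k\<le>n. C * t * r ^ k)"
  proof (rule sum_mono)
    fix k
    have "f k / \<beta> ^ k \<le> C * t ^ Suc k / \<beta> ^ k"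
      using f_le \<open>1 \<le> \<beta>\<close> by (intro divide_right_mono) auto
    then show "f k / \<beta> ^ k \<le> C * t * r ^ k" by (simp add: r_def power_divide)
  qed
  also have "\<dots> = C * t * (\<Sum>k\<le>n. r ^ k)" by (simp add: sum_distrib_left)
  also have "\<dots> \<le> C * t * (1 / (1 - r))"
  proof -
    have "(\<Sum>k\<le>n. r ^ k) \<le> (\<Sum>k. r ^ k)"
      using \<open>0 \<le> r\<close> \<open>r < 1\<close> by (intro sum_le_suminf) auto
    also have "\<dots> = 1 / (1 - r)" using \<open>0 \<le> r\<close> \<open>r < 1\<close> by (simp add: suminf_geometric)
    finally show ?thesis using \<open>0 \<le> C\<close> \<open>1 \<le> t\<close> by (intro mult_left_mono) auto
  qed
  also have "\<dots> = C * t * (t + 2) / (2 - t)"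
    using assms(1,2) by (simp add: r_def \<beta>_def field_simps)
  also have "\<dots> \<le> 2 - \<beta>"
  proof -
    have "C * (2 * t * (t + 2)) \<le> (2 - t)\<^sup>2" using C_small assms(1) by (simp add: le_divide_eq)
    then show ?thesis using assms(2) by (simp add: \<beta>_def field_simps power2_eq_square)
  qed
  finally show ?thesis unfolding \<beta>_def .
qed

lemma exists_avoiding_sequence:
  fixes F :: "bool list set" and t C :: real
  assumes "1 \<le> t" and "t < 2"
    and few_forbidden: "\<And>k. card {x \<in> F. length x = k} \<le> C * t ^ k"
    and C_small: "C \<le> (2 - t)\<^sup>2 / (2 * t * (t + 2))"
  shows "\<exists>\<omega>. \<forall>i j. map \<omega> [i..<j] \<notin> F"
proof -
  have "0 \<le> C" using few_forbidden[of 0] by (simp add: order.trans)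
  have "(2 - t)\<^sup>2 \<le> 1" using assms(1,2) by (intro power_le_one) auto
  moreover have "2 * 1 * (1 + 2) \<le> 2 * t * (t + 2)" using assms(1) by (intro mult_mono) auto
  ultimately have "(2 - t)\<^sup>2 / (2 * t * (t + 2)) < 1" by (simp add: divide_less_eq_1)
  with C_small have "C < 1" by linarith
  have "[] \<notin> F"
  proof
    assume "[] \<in> F"
    then have "{x \<in> F. length x = 0} = {[]}" by auto
    with few_forbidden[of 0] \<open>C < 1\<close> show False by simp
  qed
  moreover have "1 \<le> (t + 2) / 2" using assms(1) by simp
  moreover note geometric_weights_bound[OF assms(1,2) \<open>0 \<le> C\<close> few_forbidden C_small]
  ultimately have "avoiding_words F n \<noteq> {}" for n by (rule avoiding_words_nonempty)
  then have "\<exists>w. length w = n \<and> avoids F w" for n by (auto simp: avoiding_words_def)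
  moreover have "avoids F (v @ w) \<Longrightarrow> avoids F v" for v w
    using avoids_sublist by blast
  ultimately obtain \<omega> where \<omega>: "\<And>n. avoids F (map \<omega> [0..<n])"
    using prefix_closed_infinite_path by metis
  have "map \<omega> [i..<j] \<notin> F" for i j
  proof (cases "i \<le> j")
    case True
    then have "map \<omega> [0..<j] = map \<omega> [0..<i] @ map \<omega> [i..<j]"
      by (metis le0 map_append upt_add_eq_append le_add_diff_inverse)
    then show ?thesis using \<omega>[of j] by (auto simp: avoids_def)
  qed (simp add: \<open>[] \<notin> F\<close>)
  then show ?thesis by blast
qed

theorem lemma1:
  fixes c :: real and U :: recf
  assumes "c < 1" and "optimal_machine U"
  shows "\<exists>(\<omega> :: nat \<Rightarrow> bool) (d :: real). \<forall>i j. i \<le> j \<longrightarrow>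
           ereal (c * real (length (map \<omega> [i..<Suc j])) - d)
             \<le> ereal_of_enat (KM U (map \<omega> [i..<Suc j]))"
proof -
  define c' where "c' = max c 0"
  define t where "t = 2 powr c'"
  define C where "C = (2 - t)\<^sup>2 / (2 * t * (t + 2))"
  define d where "d = 1 - log 2 C"
  define F where "F = {x. ereal_of_enat (KM U x) < ereal (c' * real (length x) - d)}"
  have "1 \<le> t" "t < 2"
    using \<open>c < 1\<close> powr_less_mono[of c' 1 2] by (auto simp: t_def c'_def ge_one_powr_ge_zero)
  then have "2 powr (1 - d) = C" by (simp add: C_def d_def)
  moreover have "{x \<in> F. length x = k} =
      {x. length x = k \<and> ereal_of_enat (KM U x) < ereal (c' * real k - d)}" for k
    by (auto simp: F_def)
  ultimately have few_forbidden: "card {x \<in> F. length x = k} \<le> C * t ^ k" for k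
    using card_KM_below_linear[of k U c' d] by (simp add: t_def)
  have "C \<le> (2 - t)\<^sup>2 / (2 * t * (t + 2))" by (simp add: C_def)
  then obtain \<omega> where \<omega>: "\<And>i j. map \<omega> [i..<j] \<notin> F"
    using exists_avoiding_sequence[OF \<open>1 \<le> t\<close> \<open>t < 2\<close> few_forbidden] by blast
  have "ereal (c * real (length x) - d) \<le> ereal_of_enat (KM U x)" if "x \<notin> F" for x
  proof -
    have "ereal (c * real (length x) - d) \<le> ereal (c' * real (length x) - d)"
      by (simp add: c'_def mult_right_mono)
    also have "\<dots> \<le> ereal_of_enat (KM U x)" using \<open>x \<notin> F\<close> by (simp add: F_def not_less)
    finally show ?thesis .
  qed
  with \<omega> show ?thesis by blast
qed

end
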